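(* Let $K$ be the $n\times n$ pinned Laplacian of a digraph, with eigenvalues $\lambda_{K,i}=m_ie^{j\phi_i}$, $1\le i\le n$, satisfying $0<\underline m\le m_i\le\overline m$ and $|\phi_i|\le\overline\phi<\pi/2$. Let $\beta>0$ satisfy $\beta>\max_i 1/\mathrm{Re}\{\lambda_{K,i}\}$ and $\beta\underline m\cos\overline\phi>1$, and define $$\overline\rho=\sqrt{(\beta\overline m\sin\overline\phi)^2+(\beta\overline m\cos\overline\phi-1)^2},\qquad \overline\psi=\tan^{-1}\!\left(\frac{\beta\underline m\sin\overline\phi}{\beta\underline m\cos\overline\phi-1}\right).$$ Let $\alpha\in\mathbb{R}$ and $\tau>0$. If $$\frac{\overline\rho+1}{\overline\rho\cos\overline\psi+1}-1<\alpha\tau,$$ then for every eigenvalue $\lambda_{K,i}$ of $K$, $$|\beta\lambda_{K,i}-1|-\big(\beta\,\mathrm{Re}\{\lambda_{K,i}\}-1\big)<\alpha\tau\,\mathrm{Re}\{\beta\lambda_{K,i}\}.$$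
   Context: The pinned Laplacian $K$ is obtained from a weighted digraph Laplacian $L$ (entries $l_{ik}=-w_{ik}$ for neighbors $k$ of $i$, $l_{ii}=\sum_m w_{im}$, else $0$, $w_{ik}>0$ for neighbors) on nodes $\{1,\dots,n+1\}$ by deleting the row and column of the source node $n+1$. Its eigenvalues have positive real parts. The concluded inequality is the sufficient condition for exponential stability of the delay system $\dot Z(t)=AZ(t)+A_dZ(t-\tau)$, $A=-\alpha\beta K+\frac1\tau[I-\beta K]$, $A_d=-\frac1\tau[I-\beta K]$. *)

theory Defs
  imports "HOL-Analysis.Analysis"
begin

text \<open>Weighted digraph on nodes {1..n+1}, given by weights w i k (w i k > 0 iff k is a
neighbour of i, w i k = 0 otherwise; no self-loops).\<close>

definition weighted_digraph :: "nat \<Rightarrow> (nat \<Rightarrow> nat \<Rightarrow> real) \<Rightarrow> bool" where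
  "weighted_digraph n w \<longleftrightarrow> (\<forall>i k. w i k \<ge> 0) \<and> (\<forall>i. w i i = 0)
     \<and> (\<forall>i k. (i \<notin> {1..n+1} \<or> k \<notin> {1..n+1}) \<longrightarrow> w i k = 0)"

definition digraph_laplacian :: "nat \<Rightarrow> (nat \<Rightarrow> nat \<Rightarrow> real) \<Rightarrow> nat \<Rightarrow> nat \<Rightarrow> real" where
  "digraph_laplacian n w i k =
     (if i = k then (\<Sum>m\<in>{1..n+1}. w i m) else - w i k)"

text \<open>Pinned Laplacian: delete row and column of the source node n+1, i.e. keep
indices {1..n}.\<close>
definition pinned_laplacian :: "nat \<Rightarrow> (nat \<Rightarrow> nat \<Rightarrow> real) \<Rightarrow> nat \<Rightarrow> nat \<Rightarrow> real" where
  "pinned_laplacian n w i k =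
     (if i \<in> {1..n} \<and> k \<in> {1..n} then digraph_laplacian n w i k else 0)"

definition is_eigenvalue :: "nat \<Rightarrow> (nat \<Rightarrow> nat \<Rightarrow> real) \<Rightarrow> complex \<Rightarrow> bool" where
  "is_eigenvalue n M z \<longleftrightarrow> (\<exists>v :: nat \<Rightarrow> complex. (\<exists>i\<in>{1..n}. v i \<noteq> 0) \<and>
     (\<forall>i\<in>{1..n}. (\<Sum>k\<in>{1..n}. complex_of_real (M i k) * v k) = z * v i))"

end

theory Submission
  imports Defs
begin

text \<open>Put \<open>w = \<beta>\<lambda> - 1\<close> for an eigenvalue \<open>\<lambda>\<close>; the claim is \<open>(|w| + 1) / (Re w + 1) - 1 < \<alpha>\<tau>\<close>.
  The annular sector containing the spectrum is mapped into the region \<open>|w| \<le> \<rho>\<close>,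
  \<open>|arg w| \<le> \<psi>\<close>, so \<open>Re w \<ge> |w| cos \<psi>\<close>; since \<open>x \<mapsto> (x + 1) / (x cos \<psi> + 1)\<close> is
  increasing, the ratio is at most \<open>(\<rho> + 1) / (\<rho> cos \<psi> + 1)\<close>.\<close>

lemma cos_sin_bounds_of_abs_le:
  fixes \<phi> \<theta> :: real
  assumes "\<bar>\<phi>\<bar> \<le> \<theta>" and "\<theta> < pi / 2"
  shows "cos \<theta> \<le> cos \<phi>" and "\<bar>sin \<phi>\<bar> \<le> sin \<theta>"
proof -
  show "cos \<theta> \<le> cos \<phi>"
    using cos_monotone_0_pi_le[of "\<bar>\<phi>\<bar>" \<theta>] assms by simp
  have "\<bar>sin \<phi>\<bar> = sin \<bar>\<phi>\<bar>"
    using assms sin_ge_zero[of \<phi>] sin_ge_zero[of "-\<phi>"] by (cases "0 \<le> \<phi>") auto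
  also have "\<dots> \<le> sin \<theta>"
    using sin_monotone_2pi_le[of "\<bar>\<phi>\<bar>" \<theta>] assms by simp
  finally show "\<bar>sin \<phi>\<bar> \<le> sin \<theta>" .
qed

lemma cmod_cis_minus_one_squared:
  "(cmod (of_real r * cis \<phi> - 1))\<^sup>2 = r\<^sup>2 - 2 * r * cos \<phi> + 1"
proof -
  have "(cmod (of_real r * cis \<phi> - 1))\<^sup>2 = (r * cos \<phi> - 1)\<^sup>2 + (r * sin \<phi>)\<^sup>2"
    by (simp add: cmod_power2)
  also have "\<dots> = r\<^sup>2 * ((sin \<phi>)\<^sup>2 + (cos \<phi>)\<^sup>2) - 2 * r * cos \<phi> + 1"
    by algebra
  finally show ?thesis by simp
qed

lemma cmod_cis_minus_one_mono:
  fixes r R \<phi> \<theta> :: real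
  assumes "0 \<le> cos \<theta>" and "cos \<theta> \<le> cos \<phi>" and "cos \<theta> \<le> r" and "r \<le> R"
  shows "cmod (of_real r * cis \<phi> - 1) \<le> cmod (of_real R * cis \<theta> - 1)"
proof (rule power2_le_imp_le)
  have "r * cos \<theta> \<le> r * cos \<phi>"
    using assms by (intro mult_left_mono) auto
  moreover have "0 \<le> (R - r) * (R + r - 2 * cos \<theta>)"
    using assms by (intro mult_nonneg_nonneg) auto
  ultimately show "(cmod (of_real r * cis \<phi> - 1))\<^sup>2 \<le> (cmod (of_real R * cis \<theta> - 1))\<^sup>2"
    unfolding cmod_cis_minus_one_squared by (simp add: power2_eq_square algebra_simps)
qed simp

text \<open>Geometrically: for \<open>l \<le> r\<close> the argument of \<open>r cis \<phi> - 1\<close> is at most that of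
  \<open>l cis \<theta> - 1\<close>.\<close>

lemma abs_Im_cis_minus_one_le:
  fixes l r \<phi> \<theta> :: real
  assumes "0 < l" and "1 < l * cos \<theta>" and "l \<le> r"
    and "cos \<theta> \<le> cos \<phi>" and "\<bar>sin \<phi>\<bar> \<le> sin \<theta>"
  shows "\<bar>Im (of_real r * cis \<phi> - 1)\<bar> * (l * cos \<theta> - 1)
           \<le> l * sin \<theta> * Re (of_real r * cis \<phi> - 1)"
proof -
  have "\<bar>Im (of_real r * cis \<phi> - 1)\<bar> * (l * cos \<theta> - 1) \<le> r * sin \<theta> * (l * cos \<theta> - 1)"
    using assms by (intro mult_right_mono) (auto simp: abs_mult mult_left_mono)
  also have "\<dots> \<le> l * sin \<theta> * (r * cos \<phi> - 1)"
  proof -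
    have "0 \<le> sin \<theta> * (l * r * (cos \<phi> - cos \<theta>) + (r - l))"
      using assms by (intro mult_nonneg_nonneg add_nonneg_nonneg) auto
    then show ?thesis by (simp add: algebra_simps)
  qed
  finally show ?thesis by simp
qed

lemma cmod_mult_cos_arctan_le_Re:
  fixes w :: complex and t :: real
  assumes "0 \<le> Re w" and "\<bar>Im w\<bar> \<le> t * Re w"
  shows "cmod w * cos (arctan t) \<le> Re w"
proof -
  have "(Im w)\<^sup>2 \<le> (t * Re w)\<^sup>2"
    using assms by (metis abs_ge_zero power2_abs power_mono)
  then have "cmod w \<le> sqrt ((Re w)\<^sup>2 * (1 + t\<^sup>2))"
    unfolding cmod_def by (intro real_sqrt_le_mono) (simp add: algebra_simps power_mult_distrib)
  also have "\<dots> = Re w * sqrt (1 + t\<^sup>2)"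
    using assms(1) by (simp add: real_sqrt_mult)
  finally have "cmod w \<le> Re w * sqrt (1 + t\<^sup>2)" .
  moreover have "0 < 1 + t\<^sup>2"
    by (simp add: add_pos_nonneg)
  ultimately show ?thesis
    by (simp add: cos_arctan divide_le_eq)
qed

lemma ratio_le_ratio_mono:
  fixes x y a c :: real
  assumes "0 \<le> c" and "c \<le> 1" and "0 \<le> x" and "x \<le> y" and "x * c \<le> a"
  shows "(x + 1) / (a + 1) \<le> (y + 1) / (y * c + 1)"
proof -
  have "0 \<le> x * c"
    using assms by simp
  then have "0 < x * c + 1" and "0 < a + 1"
    using assms by linarith+
  have "(x + 1) / (a + 1) \<le> (x + 1) / (x * c + 1)"
    using assms \<open>0 < x * c + 1\<close> \<open>0 < a + 1\<close> by (intro divide_left_mono mult_pos_pos) auto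
  also have "\<dots> \<le> (y + 1) / (y * c + 1)"
  proof -
    have "0 \<le> (y - x) * (1 - c)"
      using assms by simp
    then have "(x + 1) * (y * c + 1) \<le> (y + 1) * (x * c + 1)"
      by (simp add: algebra_simps)
    then show ?thesis
      using assms \<open>0 < x * c + 1\<close> by (simp add: divide_simps add_nonneg_pos)
  qed
  finally show ?thesis .
qed

lemma sector_delay_margin:
  fixes m \<phi> m_lo m_hi \<theta> \<beta> k :: real
  assumes m_bounds: "m_lo \<le> m" "m \<le> m_hi" and m_lo_pos: "0 < m_lo"
    and \<phi>_bound: "\<bar>\<phi>\<bar> \<le> \<theta>" and \<theta>_lt: "\<theta> < pi / 2"
    and \<beta>_pos: "0 < \<beta>" and \<beta>_cos: "1 < \<beta> * m_lo * cos \<theta>"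
    and margin: "(let \<rho> = sqrt ((\<beta> * m_hi * sin \<theta>)\<^sup>2 + (\<beta> * m_hi * cos \<theta> - 1)\<^sup>2);
                      \<psi> = arctan ((\<beta> * m_lo * sin \<theta>) / (\<beta> * m_lo * cos \<theta> - 1))
                  in (\<rho> + 1) / (\<rho> * cos \<psi> + 1) - 1 < k)"
  defines "z \<equiv> of_real m * cis \<phi>"
  shows "cmod (of_real \<beta> * z - 1) - (\<beta> * Re z - 1) < k * Re (of_real \<beta> * z)"
proof -
  define l r where "l = \<beta> * m_lo" and "r = \<beta> * m"
  define w where "w = of_real r * cis \<phi> - 1"
  define t where "t = l * sin \<theta> / (l * cos \<theta> - 1)"
  define \<rho> where "\<rho> = cmod (of_real (\<beta> * m_hi) * cis \<theta> - 1)"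
  define c where "c = cos (arctan t)"
  have w_eq: "of_real \<beta> * z - 1 = w"
    by (simp add: z_def w_def r_def)
  have cos_le: "cos \<theta> \<le> cos \<phi>" and sin_le: "\<bar>sin \<phi>\<bar> \<le> sin \<theta>"
    using cos_sin_bounds_of_abs_le[OF \<phi>_bound \<theta>_lt] by auto
  have l_pos: "0 < l" and l_cos: "1 < l * cos \<theta>"
    using \<beta>_pos m_lo_pos \<beta>_cos by (simp_all add: l_def)
  have cos_pos: "0 < cos \<theta>"
    using l_pos l_cos by (metis less_trans zero_less_mult_pos zero_less_one)
  have l_le_r: "l \<le> r"
    using m_bounds \<beta>_pos by (simp add: l_def r_def)
  have "cos \<theta> \<le> l"
    using l_cos cos_pos cos_le_one[of \<theta>] by (smt (verit) mult_le_cancel_right1)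
  then have "cmod w \<le> \<rho>"
    unfolding w_def \<rho>_def using cos_pos cos_le l_le_r m_bounds \<beta>_pos
    by (intro cmod_cis_minus_one_mono) (auto simp: r_def)
  have Re_w_pos: "0 < Re w"
  proof -
    have "l * cos \<theta> \<le> r * cos \<phi>"
      using l_le_r cos_le cos_pos l_pos by (intro mult_mono) auto
    then show ?thesis
      using l_cos by (simp add: w_def)
  qed
  have "\<bar>Im w\<bar> \<le> t * Re w"
    using abs_Im_cis_minus_one_le[OF l_pos l_cos l_le_r cos_le sin_le] l_cos
    by (simp add: w_def t_def pos_le_divide_eq mult.commute mult.left_commute)
  moreover have "0 \<le> t"
    using l_pos l_cos sin_le by (simp add: t_def)
  ultimately have "cmod w * c \<le> Re w"
    unfolding c_def using Re_w_pos by (intro cmod_mult_cos_arctan_le_Re) auto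
  moreover have "0 \<le> c" and "c \<le> 1"
    unfolding c_def by (simp add: cos_arctan) (rule cos_le_one)
  ultimately have "(cmod w + 1) / (Re w + 1) \<le> (\<rho> + 1) / (\<rho> * c + 1)"
    using \<open>cmod w \<le> \<rho>\<close> by (intro ratio_le_ratio_mono) auto
  moreover have "(\<rho> + 1) / (\<rho> * c + 1) - 1 < k"
    using margin by (simp add: Let_def \<rho>_def c_def t_def l_def cmod_def add.commute)
  ultimately have "(cmod w + 1) / (Re w + 1) < k + 1"
    by linarith
  then have "cmod w - Re w < k * (Re w + 1)"
    using Re_w_pos by (simp add: divide_less_eq algebra_simps)
  moreover have "\<beta> * Re z = Re w + 1"
    using w_eq by (auto simp: complex_eq_iff)
  ultimately show ?thesis
    using w_eq by simp
qed

theorem corollary1: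
  fixes n :: nat and w :: "nat \<Rightarrow> nat \<Rightarrow> real"
    and m_lo m_hi phi_hi beta alpha tau :: real
  assumes graph: "weighted_digraph n w"
    and eig_polar: "\<And>z. is_eigenvalue n (pinned_laplacian n w) z \<Longrightarrow>
        \<exists>m \<phi>. z = complex_of_real m * cis \<phi> \<and> m_lo \<le> m \<and> m \<le> m_hi \<and> \<bar>\<phi>\<bar> \<le> phi_hi"
    and m_lo_pos: "0 < m_lo"
    and phi_hi_lt: "phi_hi < pi / 2"
    and beta_pos: "beta > 0"
    and beta_gt: "\<And>z. is_eigenvalue n (pinned_laplacian n w) z \<Longrightarrow> beta > 1 / Re z"
    and beta_cos: "beta * m_lo * cos phi_hi > 1"
    and tau_pos: "tau > 0"
    and cond: "(let rho = sqrt ((beta * m_hi * sin phi_hi)\<^sup>2 + (beta * m_hi * cos phi_hi - 1)\<^sup>2);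
                    psi = arctan ((beta * m_lo * sin phi_hi) / (beta * m_lo * cos phi_hi - 1))
                in (rho + 1) / (rho * cos psi + 1) - 1 < alpha * tau)"
  shows "\<forall>z. is_eigenvalue n (pinned_laplacian n w) z \<longrightarrow>
           cmod (complex_of_real beta * z - 1) - (beta * Re z - 1)
             < alpha * tau * Re (complex_of_real beta * z)"
proof (intro allI impI)
  fix z
  assume "is_eigenvalue n (pinned_laplacian n w) z"
  then obtain m \<phi> where "z = of_real m * cis \<phi>" and "m_lo \<le> m" "m \<le> m_hi" "\<bar>\<phi>\<bar> \<le> phi_hi"
    using eig_polar by blast
  then show "cmod (complex_of_real beta * z - 1) - (beta * Re z - 1)
               < alpha * tau * Re (complex_of_real beta * z)"
    using sector_delay_margin m_lo_pos phi_hi_lt beta_pos beta_cos cond by blast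
qed

end
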